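(* Let $G$ be a finite metric graph and let $B\subset V$ be a set of vertices containing all boundary vertices and all proper core vertices of $G$. Let $\lambda\in\mathbb{R}$ and let $f\in\ker(-\Delta_G-\lambda)$ satisfy $f(v)=0$ for all $v\in B$. Then $f(v)=0$ for all $v\in V$.
   Context: A finite metric graph $G$ has finite vertex set $V$ and finite edge set $E$ (loops and multiple edges allowed) with lengths $L:E\to(0,\infty)$, each edge identified with $[0,L(e)]$. $-\Delta_G$ denotes the Laplacian on $G$ with Kirchhoff vertex conditions: it acts as $-f_e''$ on each edge, with domain consisting of functions that are edgewise $H^2$, continuous at every vertex (with common value $f(v)$), and satisfy $\sum_{t(e)=v} f_e'(L(e)) - \sum_{o(e)=v} f_e'(0)=0$ at every vertex $v$ (where $o(e),t(e)$ are the vertices identified with $0$ and $L(e)$). The core of $G$ is the largest subgraph of $G$ without vertices of degree one. A boundary vertex is a vertex of degree one. A proper core vertex is a vertex $v$ such that all edges attached to $v$ belong to the core of $G$. *)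

theory Defs
  imports "HOL-Analysis.Analysis"
begin

text \<open>A finite metric graph is given by a finite vertex set V, a finite edge set E
  (loops and multiple edges allowed, edges are abstract objects), origin and terminal
  maps org, trm and lengths L. Edge e is identified with the interval [0, L e], with 0
  at org e and L e at trm e.\<close>

definition metric_graph ::
  "'v set \<Rightarrow> 'e set \<Rightarrow> ('e \<Rightarrow> 'v) \<Rightarrow> ('e \<Rightarrow> 'v) \<Rightarrow> ('e \<Rightarrow> real) \<Rightarrow> bool" where
  "metric_graph V E org trm L \<longleftrightarrow> finite V \<and> finite E \<and> org ` E \<subseteq> V \<and> trm ` E \<subseteq> V
     \<and> (\<forall>e\<in>E. L e > 0)"

text \<open>Degree of a vertex in the (sub)graph with edge set F (a loop counts twice).\<close>
definition gdegree :: "'e set \<Rightarrow> ('e \<Rightarrow> 'v) \<Rightarrow> ('e \<Rightarrow> 'v) \<Rightarrow> 'v \<Rightarrow> nat" where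
  "gdegree F org trm v = card {e\<in>F. org e = v} + card {e\<in>F. trm e = v}"

text \<open>Edges of the core: the largest subgraph without vertices of degree one
  (the union of all edge subsets in which no vertex has degree one).\<close>
definition core_edges :: "'e set \<Rightarrow> ('e \<Rightarrow> 'v) \<Rightarrow> ('e \<Rightarrow> 'v) \<Rightarrow> 'e set" where
  "core_edges E org trm = \<Union>{F. F \<subseteq> E \<and> (\<forall>v. gdegree F org trm v \<noteq> 1)}"

definition boundary_vertex :: "'e set \<Rightarrow> ('e \<Rightarrow> 'v) \<Rightarrow> ('e \<Rightarrow> 'v) \<Rightarrow> 'v \<Rightarrow> bool" where
  "boundary_vertex E org trm v \<longleftrightarrow> gdegree E org trm v = 1"

definition proper_core_vertex :: "'e set \<Rightarrow> ('e \<Rightarrow> 'v) \<Rightarrow> ('e \<Rightarrow> 'v) \<Rightarrow> 'v \<Rightarrow> bool" where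
  "proper_core_vertex E org trm v \<longleftrightarrow>
     (\<forall>e\<in>E. (org e = v \<or> trm e = v) \<longrightarrow> e \<in> core_edges E org trm)"

text \<open>f = (fe, fv) lies in ker(-Delta_G - lambda): on each edge fe e is (classically)
  twice differentiable on [0, L e] with -fe'' = lambda fe; continuity at vertices with
  common value fv v; Kirchhoff condition at every vertex.  (Every H^2 weak solution
  of -u'' = lambda u on an interval is classical, so this is the kernel.)\<close>
definition in_kernel ::
  "'v set \<Rightarrow> 'e set \<Rightarrow> ('e \<Rightarrow> 'v) \<Rightarrow> ('e \<Rightarrow> 'v) \<Rightarrow> ('e \<Rightarrow> real) \<Rightarrow> real
    \<Rightarrow> ('e \<Rightarrow> real \<Rightarrow> complex) \<Rightarrow> ('v \<Rightarrow> complex) \<Rightarrow> bool" where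
  "in_kernel V E org trm L lam fe fv \<longleftrightarrow>
     (\<forall>e\<in>E. \<exists>d. \<forall>x\<in>{0..L e}.
        (fe e has_vector_derivative d x) (at x within {0..L e}) \<and>
        (d has_vector_derivative (- complex_of_real lam * fe e x)) (at x within {0..L e}))
   \<and> (\<forall>e\<in>E. fe e 0 = fv (org e) \<and> fe e (L e) = fv (trm e))
   \<and> (\<forall>v\<in>V. (\<Sum>e\<in>{e\<in>E. trm e = v}. vector_derivative (fe e) (at (L e) within {0..L e}))
           - (\<Sum>e\<in>{e\<in>E. org e = v}. vector_derivative (fe e) (at 0 within {0..L e})) = 0)"

end

theory Submission
  imports Defs
begin

(* Let F be the core together with the edges on which f is not identically zero.  At a
   vertex v of degree one in F we have f(v) = 0: either v is a boundary vertex of G, or v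
   meets an edge outside F, on which f vanishes.  Kirchhoff's condition at v involves only
   the unique F-edge e at v, so f_e has zero value and zero derivative at v; by uniqueness
   for -u'' = lam u (an energy estimate for |u|^2 + |u'|^2) f_e vanishes, so e lies in the
   core and v has degree one in the core, which is impossible.  Hence F is contained in the
   core, f vanishes on every non-core edge and so at every vertex that is not a proper core
   vertex. *)

lemma gronwall_nonpos:
  fixes h h' :: "real \<Rightarrow> real"
  assumes "a \<le> b" and cont: "continuous_on {a..b} h" and "h a = 0"
    and deriv: "\<And>y. a < y \<Longrightarrow> y < b \<Longrightarrow> (h has_real_derivative h' y) (at y)"
    and bound: "\<And>y. a < y \<Longrightarrow> y < b \<Longrightarrow> h' y \<le> K * h y"
  shows "h b \<le> 0"
proof -
  define Q where "Q y = h y * exp (- K * (y - a))" for y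
  have "Q b \<le> Q a"
  proof (rule DERIV_nonpos_imp_decreasing_open[OF \<open>a \<le> b\<close>])
    fix y assume y: "a < y" "y < b"
    have "(Q has_real_derivative (h' y - K * h y) * exp (- K * (y - a))) (at y)"
      unfolding Q_def using deriv[OF y] by (auto intro!: derivative_eq_intros simp: algebra_simps)
    moreover have "(h' y - K * h y) * exp (- K * (y - a)) \<le> 0"
      using bound[OF y] by (simp add: mult_nonpos_nonneg)
    ultimately show "\<exists>z. (Q has_real_derivative z) (at y) \<and> z \<le> 0" by blast
  qed (unfold Q_def, intro continuous_intros cont)
  then show ?thesis using \<open>h a = 0\<close> by (simp add: Q_def mult_le_0_iff)
qed

lemma eq_0_if_abs_deriv_le_mult_self:
  fixes h h' :: "real \<Rightarrow> real"
  assumes cont: "continuous_on {s..t} h"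
    and deriv: "\<And>y. s < y \<Longrightarrow> y < t \<Longrightarrow> (h has_real_derivative h' y) (at y)"
    and bound: "\<And>y. s < y \<Longrightarrow> y < t \<Longrightarrow> \<bar>h' y\<bar> \<le> K * h y"
    and nonneg: "\<And>y. h y \<ge> 0"
    and "a \<in> {s..t}" "h a = 0" "x \<in> {s..t}"
  shows "h x = 0"
proof -
  have "h x \<le> 0"
  proof (cases "a \<le> x")
    case True
    show ?thesis
    proof (rule gronwall_nonpos[where h = h and h' = h'])
      show "continuous_on {a..x} h"
        using \<open>a \<in> {s..t}\<close> \<open>x \<in> {s..t}\<close> by (intro continuous_on_subset[OF cont]) auto
    next
      fix y assume "a < y" "y < x"
      then have "s < y" "y < t" using \<open>a \<in> {s..t}\<close> \<open>x \<in> {s..t}\<close> by auto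
      then show "(h has_real_derivative h' y) (at y)" and "h' y \<le> K * h y"
        using deriv bound[of y] by auto
    qed (use True \<open>h a = 0\<close> in auto)
  next
    case False
    have "h (- (- x)) \<le> 0"
    proof (rule gronwall_nonpos[where h = "\<lambda>y. h (- y)" and h' = "\<lambda>y. - h' (- y)" and a = "- a"])
      show "continuous_on {- a..- x} (\<lambda>y. h (- y))"
        using \<open>a \<in> {s..t}\<close> \<open>x \<in> {s..t}\<close>
        by (intro continuous_on_compose2[OF cont]) (auto intro: continuous_intros)
    next
      fix y assume "- a < y" "y < - x"
      then have "s < - y" "- y < t" using \<open>a \<in> {s..t}\<close> \<open>x \<in> {s..t}\<close> by auto
      then show "((\<lambda>y. h (- y)) has_real_derivative - h' (- y)) (at y)"
        and "- h' (- y) \<le> K * h (- y)"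
        using deriv bound[of "- y"] by (auto simp: DERIV_mirror[symmetric])
    qed (use False \<open>h a = 0\<close> in auto)
    then show ?thesis by simp
  qed
  with nonneg[of x] show ?thesis by simp
qed

lemma energy_has_real_derivative:
  fixes f d :: "real \<Rightarrow> complex"
  assumes f: "(f has_vector_derivative d x) (at x within S)"
    and d: "(d has_vector_derivative (- complex_of_real lam * f x)) (at x within S)"
  shows "((\<lambda>x. f x \<bullet> f x + d x \<bullet> d x) has_real_derivative 2 * (1 - lam) * (f x \<bullet> d x))
    (at x within S)"
proof -
  have "- complex_of_real lam * f x = (- lam) *\<^sub>R f x"
    by (simp add: scaleR_conv_of_real)
  then have "(d has_derivative (\<lambda>h. h *\<^sub>R ((- lam) *\<^sub>R f x))) (at x within S)"
    using d by (simp add: has_vector_derivative_def)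
  moreover have "(f has_derivative (\<lambda>h. h *\<^sub>R d x)) (at x within S)"
    using f by (simp add: has_vector_derivative_def)
  ultimately have "((\<lambda>x. f x \<bullet> f x + d x \<bullet> d x) has_derivative
      (\<lambda>h. f x \<bullet> (h *\<^sub>R d x) + (h *\<^sub>R d x) \<bullet> f x
         + (d x \<bullet> (h *\<^sub>R ((- lam) *\<^sub>R f x)) + (h *\<^sub>R ((- lam) *\<^sub>R f x)) \<bullet> d x))) (at x within S)"
    by (intro derivative_intros)
  moreover have "(\<lambda>h. f x \<bullet> (h *\<^sub>R d x) + (h *\<^sub>R d x) \<bullet> f x
         + (d x \<bullet> (h *\<^sub>R ((- lam) *\<^sub>R f x)) + (h *\<^sub>R ((- lam) *\<^sub>R f x)) \<bullet> d x))
      = (\<lambda>h. 2 * (1 - lam) * (f x \<bullet> d x) * h)"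
    by (simp add: inner_commute algebra_simps)
  ultimately show ?thesis
    by (simp add: has_field_derivative_def)
qed

lemma abs_energy_derivative_le:
  fixes u w :: "'a::real_inner"
  shows "\<bar>2 * (1 - lam) * (u \<bullet> w)\<bar> \<le> \<bar>1 - lam\<bar> * (u \<bullet> u + w \<bullet> w)"
proof -
  have "2 * \<bar>u \<bullet> w\<bar> \<le> 2 * (norm u * norm w)"
    by (simp add: Cauchy_Schwarz_ineq2)
  also have "\<dots> \<le> u \<bullet> u + w \<bullet> w"
    using sum_squares_bound[of "norm u" "norm w"] by (simp add: power2_norm_eq_inner)
  finally have "\<bar>1 - lam\<bar> * (2 * \<bar>u \<bullet> w\<bar>) \<le> \<bar>1 - lam\<bar> * (u \<bullet> u + w \<bullet> w)"
    by (rule mult_left_mono) simp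
  then show ?thesis
    unfolding abs_mult by simp
qed

lemma ode_solution_eq_0:
  fixes f d :: "real \<Rightarrow> complex"
  assumes ode: "\<forall>x\<in>{s..t}. (f has_vector_derivative d x) (at x within {s..t}) \<and>
        (d has_vector_derivative (- complex_of_real lam * f x)) (at x within {s..t})"
    and "a \<in> {s..t}" "f a = 0" "d a = 0" "x \<in> {s..t}"
  shows "f x = 0"
proof -
  define En where "En y = f y \<bullet> f y + d y \<bullet> d y" for y
  have deriv: "(En has_real_derivative 2 * (1 - lam) * (f y \<bullet> d y)) (at y within {s..t})"
    if "y \<in> {s..t}" for y
    unfolding En_def using ode that by (intro energy_has_real_derivative) auto
  have "En x = 0"
  proof (rule eq_0_if_abs_deriv_le_mult_self
      [where h = En and h' = "\<lambda>y. 2 * (1 - lam) * (f y \<bullet> d y)" and K = "\<bar>1 - lam\<bar>"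
        and s = s and t = t and a = a])
    show "continuous_on {s..t} En"
      using deriv by (meson DERIV_continuous continuous_on_eq_continuous_within)
  next
    fix y assume "s < y" "y < t"
    then show "(En has_real_derivative 2 * (1 - lam) * (f y \<bullet> d y)) (at y)"
      using deriv[of y] at_within_interior[of y "{s..t}"] by simp
  next
    show "\<bar>2 * (1 - lam) * (f y \<bullet> d y)\<bar> \<le> \<bar>1 - lam\<bar> * En y" for y
      unfolding En_def by (rule abs_energy_derivative_le)
  qed (use assms in \<open>auto simp: En_def\<close>)
  then show ?thesis
    by (simp add: En_def add_nonneg_eq_0_iff)
qed

lemma vector_derivative_within_Icc:
  fixes a b x :: real
  assumes "a < b" "x \<in> {a..b}" "(f has_vector_derivative f') (at x within {a..b})"
  shows "vector_derivative f (at x within {a..b}) = f'"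
  using vector_derivative_within_cbox[of a b x f f'] assms by (simp add: cbox_interval)

lemma gdegree_cong_incident:
  assumes "G \<subseteq> F" and "\<And>e. e \<in> F \<Longrightarrow> org e = v \<or> trm e = v \<Longrightarrow> e \<in> G"
  shows "gdegree G org trm v = gdegree F org trm v"
proof -
  have "{e\<in>G. org e = v} = {e\<in>F. org e = v}" "{e\<in>G. trm e = v} = {e\<in>F. trm e = v}"
    using assms by auto
  then show ?thesis
    unfolding gdegree_def by simp
qed

lemma gdegree_mono:
  assumes "finite F" "G \<subseteq> F"
  shows "gdegree G org trm v \<le> gdegree F org trm v"
  unfolding gdegree_def using assms by (intro add_mono card_mono) auto

lemma gdegree_pos:
  assumes "finite F" "e \<in> F" "org e = v \<or> trm e = v"
  shows "0 < gdegree F org trm v"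
  unfolding gdegree_def using assms by (auto simp: card_gt_0_iff)

lemma gdegree_eq_1E:
  assumes "finite F" "gdegree F org trm v = 1"
  obtains e where "e \<in> F" "{e'\<in>F. org e' = v} = {e}" "{e'\<in>F. trm e' = v} = {}"
    | e where "e \<in> F" "{e'\<in>F. org e' = v} = {}" "{e'\<in>F. trm e' = v} = {e}"
proof -
  let ?A = "{e'\<in>F. org e' = v}" and ?T = "{e'\<in>F. trm e' = v}"
  have "card ?A = 1 \<and> ?T = {} \<or> ?A = {} \<and> card ?T = 1"
    using assms unfolding gdegree_def by (auto simp: add_is_1)
  then show ?thesis
    by (elim disjE conjE card_1_singletonE) (use that in blast)+
qed

lemma core_edges_subset: "core_edges E org trm \<subseteq> E"
  unfolding core_edges_def by auto

lemma gdegree_core_edges_neq_1: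
  assumes "finite E"
  shows "gdegree (core_edges E org trm) org trm v \<noteq> 1"
proof
  let ?C = "core_edges E org trm"
  assume "gdegree ?C org trm v = 1"
  moreover have "finite ?C"
    using assms core_edges_subset by (rule finite_subset[rotated])
  ultimately obtain e where "e \<in> ?C" "org e = v \<or> trm e = v"
    by (elim gdegree_eq_1E) auto
  then obtain F where F: "F \<subseteq> E" "\<forall>v. gdegree F org trm v \<noteq> 1" "e \<in> F"
    unfolding core_edges_def by auto
  have "F \<subseteq> ?C"
    using F unfolding core_edges_def by blast
  have "0 < gdegree F org trm v"
    using F \<open>org e = v \<or> trm e = v\<close> assms by (intro gdegree_pos) (auto intro: finite_subset)
  moreover have "gdegree F org trm v \<noteq> 1"
    using F by blast
  ultimately have "2 \<le> gdegree F org trm v"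
    by linarith
  also have "\<dots> \<le> gdegree ?C org trm v"
    using \<open>finite ?C\<close> \<open>F \<subseteq> ?C\<close> by (rule gdegree_mono)
  finally show False
    using \<open>gdegree ?C org trm v = 1\<close> by simp
qed

locale graph_eigenfunction =
  fixes V :: "'v set" and E :: "'e set" and org trm :: "'e \<Rightarrow> 'v" and L :: "'e \<Rightarrow> real"
    and lam :: real and fe :: "'e \<Rightarrow> real \<Rightarrow> complex" and fv :: "'v \<Rightarrow> complex"
  assumes graph: "metric_graph V E org trm L"
    and kernel: "in_kernel V E org trm L lam fe fv"
begin

lemma finite_edges: "finite E"
  using graph by (simp add: metric_graph_def)

lemma length_pos: "e \<in> E \<Longrightarrow> 0 < L e"
  using graph by (simp add: metric_graph_def)

lemma endpoints_in_vertices: "e \<in> E \<Longrightarrow> org e \<in> V" "e \<in> E \<Longrightarrow> trm e \<in> V"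
  using graph by (auto simp: metric_graph_def)

lemma edge_ode:
  assumes "e \<in> E"
  obtains d where "\<forall>x\<in>{0..L e}. (fe e has_vector_derivative d x) (at x within {0..L e}) \<and>
      (d has_vector_derivative (- complex_of_real lam * fe e x)) (at x within {0..L e})"
  using kernel assms unfolding in_kernel_def by blast

lemma edge_endpoint_values: "e \<in> E \<Longrightarrow> fe e 0 = fv (org e)" "e \<in> E \<Longrightarrow> fe e (L e) = fv (trm e)"
  using kernel by (auto simp: in_kernel_def)

definition nonzero_edges :: "'e set" where
  "nonzero_edges = {e\<in>E. \<exists>x\<in>{0..L e}. fe e x \<noteq> 0}"

lemma vertex_value_eq_0_if_zero_edge:
  assumes "e \<in> E" "e \<notin> nonzero_edges" "org e = v \<or> trm e = v"
  shows "fv v = 0"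
  using assms length_pos[OF \<open>e \<in> E\<close>] edge_endpoint_values[OF \<open>e \<in> E\<close>]
  by (auto simp: nonzero_edges_def)

lemma edge_derivative_eq_0_if_zero_edge:
  assumes "e \<in> E" "e \<notin> nonzero_edges" "x \<in> {0..L e}"
  shows "vector_derivative (fe e) (at x within {0..L e}) = 0"
proof -
  have zero: "\<And>y. y \<in> {0..L e} \<Longrightarrow> fe e y = 0"
    using assms(1,2) by (auto simp: nonzero_edges_def)
  have "(fe e has_vector_derivative 0) (at x within {0..L e})"
    by (rule has_vector_derivative_transform[where f = "\<lambda>_. 0", OF assms(3)]) (simp_all add: zero)
  then show ?thesis
    using length_pos[OF \<open>e \<in> E\<close>] assms(3) by (intro vector_derivative_within_Icc) auto
qed

lemma zero_edge_if_Cauchy_data_zero: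
  assumes "e \<in> E" "a \<in> {0..L e}" "fe e a = 0"
    and "vector_derivative (fe e) (at a within {0..L e}) = 0"
  shows "e \<notin> nonzero_edges"
proof -
  obtain d where d: "\<forall>x\<in>{0..L e}. (fe e has_vector_derivative d x) (at x within {0..L e}) \<and>
      (d has_vector_derivative (- complex_of_real lam * fe e x)) (at x within {0..L e})"
    using edge_ode[OF \<open>e \<in> E\<close>] .
  have "vector_derivative (fe e) (at a within {0..L e}) = d a"
    using length_pos[OF \<open>e \<in> E\<close>] \<open>a \<in> {0..L e}\<close> d by (intro vector_derivative_within_Icc) auto
  with assms(4) have "d a = 0"
    by simp
  then show ?thesis
    using ode_solution_eq_0[OF d \<open>a \<in> {0..L e}\<close> \<open>fe e a = 0\<close>] by (auto simp: nonzero_edges_def)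
qed

lemma kirchhoff_restrict:
  assumes "nonzero_edges \<subseteq> F" "F \<subseteq> E" "v \<in> V"
  shows "(\<Sum>e\<in>{e\<in>F. trm e = v}. vector_derivative (fe e) (at (L e) within {0..L e}))
       - (\<Sum>e\<in>{e\<in>F. org e = v}. vector_derivative (fe e) (at 0 within {0..L e})) = 0"
proof -
  have outside: "vector_derivative (fe e) (at x within {0..L e}) = 0"
    if "e \<in> E - F" "x = 0 \<or> x = L e" for e x
    using that assms(1) length_pos[of e] by (intro edge_derivative_eq_0_if_zero_edge) auto
  have "(\<Sum>e\<in>{e\<in>E. trm e = v}. vector_derivative (fe e) (at (L e) within {0..L e}))
      = (\<Sum>e\<in>{e\<in>F. trm e = v}. vector_derivative (fe e) (at (L e) within {0..L e}))"
    by (rule sum.mono_neutral_right) (use finite_edges assms(2) outside in auto)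
  moreover have "(\<Sum>e\<in>{e\<in>E. org e = v}. vector_derivative (fe e) (at 0 within {0..L e}))
      = (\<Sum>e\<in>{e\<in>F. org e = v}. vector_derivative (fe e) (at 0 within {0..L e}))"
    by (rule sum.mono_neutral_right) (use finite_edges assms(2) outside in auto)
  moreover have "(\<Sum>e\<in>{e\<in>E. trm e = v}. vector_derivative (fe e) (at (L e) within {0..L e}))
       - (\<Sum>e\<in>{e\<in>E. org e = v}. vector_derivative (fe e) (at 0 within {0..L e})) = 0"
    using kernel \<open>v \<in> V\<close> unfolding in_kernel_def by blast
  ultimately show ?thesis
    by simp
qed

lemma vertex_value_eq_0_at_degree_1:
  assumes boundary: "\<forall>v\<in>V. boundary_vertex E org trm v \<longrightarrow> fv v = 0"
    and "nonzero_edges \<subseteq> F" "F \<subseteq> E" "v \<in> V" "gdegree F org trm v = 1"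
  shows "fv v = 0"
proof (cases "\<exists>e\<in>E - F. org e = v \<or> trm e = v")
  case True
  then show ?thesis
    using \<open>nonzero_edges \<subseteq> F\<close> vertex_value_eq_0_if_zero_edge by blast
next
  case False
  then have "gdegree E org trm v = gdegree F org trm v"
    using \<open>F \<subseteq> E\<close> by (intro gdegree_cong_incident[symmetric]) auto
  then show ?thesis
    using boundary assms(4,5) by (simp add: boundary_vertex_def)
qed

lemma zero_edge_at_degree_1:
  assumes "nonzero_edges \<subseteq> F" "F \<subseteq> E" "v \<in> V" "gdegree F org trm v = 1" "fv v = 0"
  obtains e where "e \<in> F" "e \<notin> nonzero_edges" "org e = v \<or> trm e = v"
    "\<And>e'. e' \<in> F \<Longrightarrow> org e' = v \<or> trm e' = v \<Longrightarrow> e' = e"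
proof -
  have kirchhoff: "(\<Sum>e\<in>{e\<in>F. trm e = v}. vector_derivative (fe e) (at (L e) within {0..L e}))
       - (\<Sum>e\<in>{e\<in>F. org e = v}. vector_derivative (fe e) (at 0 within {0..L e})) = 0"
    using assms(1-3) by (rule kirchhoff_restrict)
  have "finite F"
    using finite_edges \<open>F \<subseteq> E\<close> by (rule finite_subset[rotated])
  from this \<open>gdegree F org trm v = 1\<close> show ?thesis
  proof (cases rule: gdegree_eq_1E)
    case (1 e)
    then have "e \<in> E" "org e = v"
      using \<open>F \<subseteq> E\<close> by blast+
    have "vector_derivative (fe e) (at 0 within {0..L e}) = 0"
      using kirchhoff 1 by simp
    moreover have "fe e 0 = 0"
      using \<open>e \<in> E\<close> \<open>org e = v\<close> \<open>fv v = 0\<close> edge_endpoint_values by simp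
    ultimately have "e \<notin> nonzero_edges"
      using \<open>e \<in> E\<close> length_pos[OF \<open>e \<in> E\<close>]
      by (intro zero_edge_if_Cauchy_data_zero[where a = 0]) auto
    with 1 \<open>org e = v\<close> show ?thesis
      using that by blast
  next
    case (2 e)
    then have "e \<in> E" "trm e = v"
      using \<open>F \<subseteq> E\<close> by blast+
    have "vector_derivative (fe e) (at (L e) within {0..L e}) = 0"
      using kirchhoff 2 by simp
    moreover have "fe e (L e) = 0"
      using \<open>e \<in> E\<close> \<open>trm e = v\<close> \<open>fv v = 0\<close> edge_endpoint_values by simp
    ultimately have "e \<notin> nonzero_edges"
      using \<open>e \<in> E\<close> length_pos[OF \<open>e \<in> E\<close>]
      by (intro zero_edge_if_Cauchy_data_zero[where a = "L e"]) auto
    with 2 \<open>trm e = v\<close> show ?thesis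
      using that by blast
  qed
qed

lemma nonzero_edges_subset_core_edges:
  assumes "\<forall>v\<in>V. boundary_vertex E org trm v \<longrightarrow> fv v = 0"
  shows "nonzero_edges \<subseteq> core_edges E org trm"
proof -
  let ?C = "core_edges E org trm"
  let ?F = "?C \<union> nonzero_edges"
  have "?F \<subseteq> E"
    using core_edges_subset[of E org trm] by (auto simp: nonzero_edges_def)
  have "gdegree ?F org trm v \<noteq> 1" for v
  proof
    assume deg: "gdegree ?F org trm v = 1"
    then have "0 < gdegree ?F org trm v"
      by simp
    then obtain e0 where "e0 \<in> ?F" "org e0 = v \<or> trm e0 = v"
      unfolding gdegree_def by (auto simp: card_gt_0_iff)
    then have "v \<in> V"
      using \<open>?F \<subseteq> E\<close> endpoints_in_vertices by blast
    have "fv v = 0"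
      using assms \<open>?F \<subseteq> E\<close> \<open>v \<in> V\<close> deg by (intro vertex_value_eq_0_at_degree_1) auto
    then obtain e where "e \<in> ?F" "e \<notin> nonzero_edges"
      "\<And>e'. e' \<in> ?F \<Longrightarrow> org e' = v \<or> trm e' = v \<Longrightarrow> e' = e"
      using zero_edge_at_degree_1[OF Un_upper2 \<open>?F \<subseteq> E\<close> \<open>v \<in> V\<close> deg] by blast
    then have "gdegree ?C org trm v = gdegree ?F org trm v"
      by (intro gdegree_cong_incident) auto
    with deg gdegree_core_edges_neq_1[OF finite_edges, of org trm v] show False
      by simp
  qed
  with \<open>?F \<subseteq> E\<close> have "?F \<subseteq> ?C"
    unfolding core_edges_def by blast
  then show ?thesis
    by blast
qed

end

theorem lemma4p5:
  fixes V :: "'v set" and E :: "'e set" and org trm :: "'e \<Rightarrow> 'v" and L :: "'e \<Rightarrow> real"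
    and B :: "'v set" and lam :: real
    and fe :: "'e \<Rightarrow> real \<Rightarrow> complex" and fv :: "'v \<Rightarrow> complex"
  assumes "metric_graph V E org trm L"
    and "B \<subseteq> V"
    and "\<forall>v\<in>V. boundary_vertex E org trm v \<longrightarrow> v \<in> B"
    and "\<forall>v\<in>V. proper_core_vertex E org trm v \<longrightarrow> v \<in> B"
    and "in_kernel V E org trm L lam fe fv"
    and "\<forall>v\<in>B. fv v = 0"
  shows "\<forall>v\<in>V. fv v = 0"
proof
  interpret graph_eigenfunction V E org trm L lam fe fv
    using assms(1,5) by unfold_locales
  have support: "nonzero_edges \<subseteq> core_edges E org trm"
    using assms(3,6) by (intro nonzero_edges_subset_core_edges) blast
  fix v assume "v \<in> V"
  show "fv v = 0"
  proof (cases "proper_core_vertex E org trm v")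
    case True
    then show ?thesis
      using assms(4,6) \<open>v \<in> V\<close> by blast
  next
    case False
    then obtain e where "e \<in> E" "org e = v \<or> trm e = v" "e \<notin> core_edges E org trm"
      unfolding proper_core_vertex_def by blast
    with support show ?thesis
      by (blast intro: vertex_value_eq_0_if_zero_edge)
  qed
qed

end
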